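(* Let $T$ be the rooted infinite tree in which the root is at level $0$ and every vertex at level $n$ has exactly $2^n$ children (at level $n+1$). Then the random basic walk on $T$ is transient with positive probability: the probability that it escapes to infinity (visits infinitely many vertices, each finitely often) is strictly greater than $0$.
   Context: Each undirected edge $\{v,w\}$ is regarded as two arcs $v\to w$ and $w\to v$. A labeling assigns, at each vertex $v$ of degree $\deg(v)$, the port numbers $1,\dots,\deg(v)$ bijectively to the arcs leaving $v$ (labels on $v\to w$ and $w\to v$ need not agree). In a random labeling these bijections are chosen uniformly at random, independently for different vertices. Given a labeling, a starting vertex $v_0$ and an initial port $\ell$, the basic walk leaves $v_0$ along the arc labeled $\ell$; thereafter, whenever it enters a vertex $v$ along an arc whose label is $i$, it leaves $v$ along the arc out of $v$ labeled $(i \bmod \deg(v))+1$. The random basic walk is the basic walk for a random labeling. *)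

theory Defs
  imports "HOL-Probability.Probability"
begin

text \<open>The tree T: a vertex at level n is a list [c_0,...,c_(n-1)] of naturals with
  c_i < 2^i (the child index chosen at level i).\<close>

definition T_vertices :: "nat list set" where
  "T_vertices = {xs. \<forall>i < length xs. xs ! i < 2 ^ i}"

definition T_nbrs :: "nat list \<Rightarrow> nat list set" where
  "T_nbrs v = {v @ [c] | c. c < 2 ^ length v} \<union> (if v = [] then {} else {butlast v})"

definition T_deg :: "nat list \<Rightarrow> nat" where
  "T_deg v = card (T_nbrs v)"

text \<open>Port labelings at a single vertex v: bijections from the arcs leaving v
  (identified with their heads) onto {1..deg v}; extended by 0 off the neighbourhood.\<close>

definition local_labelings :: "nat list \<Rightarrow> (nat list \<Rightarrow> nat) set" where
  "local_labelings v =
     {f. bij_betw f (T_nbrs v) {1..T_deg v} \<and> (\<forall>w. w \<notin> T_nbrs v \<longrightarrow> f w = 0)}"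

text \<open>A labeling L: L v w is the port number of the arc v \<rightarrow> w at v.
  Random labeling: independent uniform choices at all vertices (infinite product measure).\<close>

definition random_labeling :: "(nat list \<Rightarrow> nat list \<Rightarrow> nat) measure" where
  "random_labeling = (\<Pi>\<^sub>M v\<in>T_vertices. uniform_count_measure (local_labelings v))"

definition port_nbr :: "(nat list \<Rightarrow> nat list \<Rightarrow> nat) \<Rightarrow> nat list \<Rightarrow> nat \<Rightarrow> nat list" where
  "port_nbr L v i = (THE w. w \<in> T_nbrs v \<and> L v w = i)"

text \<open>The n-th arc traversed by the basic walk (as a pair (tail, head)).
  Entering v along the arc u \<rightarrow> v whose label is i = L u v, the walk leaves v along
  the arc labeled (i mod deg v) + 1.\<close>

fun basic_arc :: "(nat list \<Rightarrow> nat list \<Rightarrow> nat) \<Rightarrow> nat list \<Rightarrow> nat \<Rightarrow> nat \<Rightarrow> nat list \<times> nat list" where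
  "basic_arc L v0 l 0 = (v0, port_nbr L v0 l)"
| "basic_arc L v0 l (Suc n) =
     (let (u, v) = basic_arc L v0 l n
      in (v, port_nbr L v ((L u v mod T_deg v) + 1)))"

definition basic_walk :: "(nat list \<Rightarrow> nat list \<Rightarrow> nat) \<Rightarrow> nat list \<Rightarrow> nat \<Rightarrow> nat \<Rightarrow> nat list" where
  "basic_walk L v0 l n = (if n = 0 then v0 else snd (basic_arc L v0 l (n - 1)))"

definition escapes :: "(nat \<Rightarrow> nat list) \<Rightarrow> bool" where
  "escapes X \<longleftrightarrow> infinite (range X) \<and> (\<forall>v. finite {n. X n = v})"

end

theory Submission
  imports Defs "HOL-Combinatorics.Transposition"
begin

text \<open>
  With probability at least 1/4 the walk moves away from the root at every step. As long as it
  has only descended, the port by which it leaves a vertex is determined by the labels it has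
  already used, while the labeling at the new vertex is fresh and uniform: the walk enters a
  vertex at level n from its parent and leaves it towards one of the 2^n children with
  probability 2^n/(2^n+1). Summing the probabilities of the disjoint events "the labels along a
  given descending path are the ones the walk needs", descending for K steps has probability
  the product of these ratios over the levels passed, which stays above 1/4 because the sum of
  2^-n converges. A walk that descends forever visits each vertex once, so it escapes.
\<close>

definition level_deg :: "nat \<Rightarrow> nat" where
  "level_deg n = 2 ^ n + (if n = 0 then 0 else 1)"

lemma T_nbrs_eq_children_parent:
  "T_nbrs v = (\<lambda>c. v @ [c]) ` {..<2 ^ length v} \<union> (if v = [] then {} else {butlast v})"
  unfolding T_nbrs_def by auto

lemma finite_T_nbrs [simp]: "finite (T_nbrs v)"
  unfolding T_nbrs_eq_children_parent by simp

lemma T_deg_eq_level_deg: "T_deg v = level_deg (length v)"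
proof -
  have "card ((\<lambda>c. v @ [c]) ` {..<2 ^ length v}) = 2 ^ length v"
    by (subst card_image) (auto simp: inj_on_def)
  moreover have "butlast v \<notin> (\<lambda>c. v @ [c]) ` {..<2 ^ length v}" if "v \<noteq> []"
    using that by (auto dest: arg_cong[where f = length])
  ultimately show ?thesis
    unfolding T_deg_def T_nbrs_eq_children_parent level_deg_def by (auto simp: card_insert_if)
qed

lemma child_in_T_nbrs: "c < 2 ^ length v \<Longrightarrow> v @ [c] \<in> T_nbrs v"
  unfolding T_nbrs_def by auto

lemma finite_local_labelings [simp]: "finite (local_labelings v)"
proof (rule finite_subset)
  show "local_labelings v \<subseteq>
      {f. \<forall>w. (w \<in> T_nbrs v \<longrightarrow> f w \<in> {1..T_deg v}) \<and> (w \<notin> T_nbrs v \<longrightarrow> f w = 0)}"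
    unfolding local_labelings_def by (auto dest: bij_betwE)
  show "finite \<dots>"
    by (intro finite_set_of_finite_funs) simp_all
qed

lemma local_labelings_nonempty: "local_labelings v \<noteq> {}"
proof -
  have "card (T_nbrs v) = card {1..T_deg v}"
    by (simp add: T_deg_def)
  then obtain h where h: "bij_betw h (T_nbrs v) {1..T_deg v}"
    by (metis finite_same_card_bij finite_T_nbrs finite_atLeastAtMost)
  let ?f = "\<lambda>w. if w \<in> T_nbrs v then h w else 0"
  have "bij_betw ?f (T_nbrs v) {1..T_deg v}"
    using h by (rule bij_betw_cong[THEN iffD1, rotated]) simp
  then have "?f \<in> local_labelings v"
    unfolding local_labelings_def by simp
  then show ?thesis by blast
qed

lemma card_local_labelings_eq_port_fibre:
  assumes w: "w \<in> T_nbrs v" and i: "i \<in> {1..T_deg v}"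
  shows "card (local_labelings v) = T_deg v * card {f \<in> local_labelings v. f w = i}"
proof -
  let ?F = "\<lambda>j. {f \<in> local_labelings v. f w = j}"
  have relabel: "Transposition.transpose a b \<circ> f \<in> ?F b"
    if "f \<in> ?F a" "a \<in> {1..T_deg v}" "b \<in> {1..T_deg v}" for f a b
  proof -
    have "bij_betw (Transposition.transpose a b \<circ> f) (T_nbrs v) {1..T_deg v}"
      using that unfolding local_labelings_def by (auto intro: bij_betw_trans)
    then show ?thesis
      using that unfolding local_labelings_def by auto
  qed
  have same_card: "card (?F j) = card (?F i)" if j: "j \<in> {1..T_deg v}" for j
  proof (rule sym, rule bij_betw_same_card)
    show "bij_betw (\<lambda>f. Transposition.transpose i j \<circ> f) (?F i) (?F j)"
      by (rule bij_betwI[where g = "\<lambda>f. Transposition.transpose i j \<circ> f"])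
        (use relabel[of _ i j] relabel[of _ j i] i j in \<open>auto simp: transpose_commute fun_eq_iff\<close>)
  qed
  have "local_labelings v = (\<Union>j\<in>{1..T_deg v}. ?F j)"
    using w unfolding local_labelings_def by (auto dest: bij_betwE)
  then have "card (local_labelings v) = card (\<Union>j\<in>{1..T_deg v}. ?F j)"
    by (rule arg_cong)
  also have "\<dots> = (\<Sum>j\<in>{1..T_deg v}. card (?F j))"
    by (rule card_UN_disjoint) auto
  also have "\<dots> = (\<Sum>j\<in>{1..T_deg v}. card (?F i))"
    by (rule sum.cong[OF refl same_card])
  also have "\<dots> = T_deg v * card (?F i)"
    by simp
  finally show ?thesis .
qed

lemma emeasure_local_labelings_port:
  assumes "w \<in> T_nbrs v" and "i \<in> {1..T_deg v}"
  shows "emeasure (uniform_count_measure (local_labelings v)) {f \<in> local_labelings v. f w = i}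
           = ennreal (1 / T_deg v)"
proof -
  let ?F = "{f \<in> local_labelings v. f w = i}"
  note fibre = card_local_labelings_eq_port_fibre[OF assms]
  have "card (local_labelings v) > 0"
    using local_labelings_nonempty by (simp add: card_gt_0_iff)
  then have "real (card ?F) \<noteq> 0"
    unfolding fibre by (simp only: of_nat_eq_0_iff neq0_conv nat_0_less_mult_iff)
  have "emeasure (uniform_count_measure (local_labelings v)) ?F
      = ennreal (real (card ?F) / real (card (local_labelings v)))"
    by (rule emeasure_uniform_count_measure) auto
  also have "real (card ?F) / real (card (local_labelings v)) = 1 / T_deg v"
    unfolding fibre of_nat_mult using \<open>real (card ?F) \<noteq> 0\<close> by (rule nonzero_divide_mult_cancel_right)
  finally show ?thesis .
qed

lemma prob_space_local_labelings: "prob_space (uniform_count_measure (local_labelings v))"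
  by (rule prob_space_uniform_count_measure) (simp_all add: local_labelings_nonempty)

lemma prob_space_random_labeling: "prob_space random_labeling"
  unfolding random_labeling_def by (rule prob_space_PiM) (rule prob_space_local_labelings)

lemma space_random_labeling: "space random_labeling = (\<Pi>\<^sub>E v\<in>T_vertices. local_labelings v)"
  unfolding random_labeling_def by (simp add: space_PiM space_uniform_count_measure)

lemma port_nbr_label:
  assumes "L \<in> space random_labeling" "v \<in> T_vertices" "w \<in> T_nbrs v"
  shows "port_nbr L v (L v w) = w"
proof -
  have "inj_on (L v) (T_nbrs v)"
    using assms(1,2) by (auto simp: space_random_labeling local_labelings_def bij_betw_def)
  then show ?thesis
    unfolding port_nbr_def using assms(3) by (auto intro!: the_equality dest: inj_onD)
qed

lemma measurable_label_at: "(\<lambda>L. L u) \<in> random_labeling \<rightarrow>\<^sub>M count_space UNIV"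
proof (cases "u \<in> T_vertices")
  case True
  then have "(\<lambda>L. L u) \<in> random_labeling \<rightarrow>\<^sub>M uniform_count_measure (local_labelings u)"
    unfolding random_labeling_def by (rule measurable_component_singleton)
  moreover have "(\<lambda>f. f) \<in> uniform_count_measure (local_labelings u) \<rightarrow>\<^sub>M count_space UNIV"
    by (subst measurable_cong_sets[OF sets_uniform_count_measure_count_space refl]) simp
  ultimately show ?thesis
    by (rule measurable_compose)
next
  case False
  have "(\<lambda>L. L u) \<in> random_labeling \<rightarrow>\<^sub>M count_space UNIV \<longleftrightarrow>
      (\<lambda>L. undefined :: nat list \<Rightarrow> nat) \<in> random_labeling \<rightarrow>\<^sub>M count_space UNIV"
    by (rule measurable_cong) (use False in \<open>auto simp: space_random_labeling PiE_def extensional_def\<close>)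
  then show ?thesis
    by simp
qed

lemma measurable_label_at_comp: "(\<lambda>L. G (L u)) \<in> random_labeling \<rightarrow>\<^sub>M count_space UNIV"
  by (rule measurable_compose[OF measurable_label_at]) simp

lemma measurable_port_nbr: "(\<lambda>L. (v, port_nbr L v i)) \<in> random_labeling \<rightarrow>\<^sub>M count_space UNIV"
  unfolding port_nbr_def by (rule measurable_label_at_comp)

lemma measurable_basic_arc: "(\<lambda>L. basic_arc L v0 l n) \<in> random_labeling \<rightarrow>\<^sub>M count_space UNIV"
proof (induction n)
  case 0
  show ?case
    using measurable_port_nbr[of v0 l] by simp
next
  case (Suc n)
  let ?step = "\<lambda>(u, v) L. (v, port_nbr L v (L u v mod T_deg v + 1))"
  have "(\<lambda>L. ?step a L) \<in> random_labeling \<rightarrow>\<^sub>M count_space UNIV" for a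
  proof (cases a)
    case (Pair u v)
    have "(\<lambda>L. (v, port_nbr L v (L u v mod T_deg v + 1))) \<in> random_labeling \<rightarrow>\<^sub>M count_space UNIV"
      by (rule measurable_compose_countable'[where f = "\<lambda>i L. (v, port_nbr L v (i mod T_deg v + 1))"
            and I = UNIV])
        (simp_all add: measurable_port_nbr measurable_label_at_comp[of "\<lambda>f. f v" u])
    then show ?thesis
      using Pair by simp
  qed
  then have "(\<lambda>L. ?step (basic_arc L v0 l n) L) \<in> random_labeling \<rightarrow>\<^sub>M count_space UNIV"
    by (rule measurable_compose_countable'[OF _ Suc.IH]) simp
  moreover have "basic_arc L v0 l (Suc n) = ?step (basic_arc L v0 l n) L" for L
    by (simp split: prod.splits)
  ultimately show ?case
    by (simp only:)
qed

lemma measurable_basic_walk [measurable]: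
  "(\<lambda>L. basic_walk L v0 l n) \<in> random_labeling \<rightarrow>\<^sub>M count_space UNIV"
proof -
  have "(\<lambda>L. snd (basic_arc L v0 l (n - 1))) \<in> random_labeling \<rightarrow>\<^sub>M count_space UNIV"
    by (rule measurable_compose[OF measurable_basic_arc]) simp
  then show ?thesis
    unfolding basic_walk_def by (cases "n = 0") simp_all
qed

lemma escapes_iff_finite_visits: "escapes X \<longleftrightarrow> (\<forall>v. finite {n. X n = v})"
proof
  assume "\<forall>v. finite {n. X n = v}"
  then have "infinite (range X)"
    using inf_img_fin_dom[of X UNIV] by (auto simp: vimage_def)
  with \<open>\<forall>v. finite {n. X n = v}\<close> show "escapes X"
    unfolding escapes_def by blast
qed (simp add: escapes_def)

lemma escapes_if_inj:
  assumes "inj X"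
  shows "escapes X"
proof -
  have "{n. X n = v} = X -` {v}" for v
    by auto
  then show ?thesis
    using assms by (simp add: escapes_iff_finite_visits finite_vimageI)
qed

lemma sets_escapes:
  "{L \<in> space random_labeling. escapes (basic_walk L v0 l)} \<in> sets random_labeling"
proof -
  \<comment> \<open>only countable quantifiers remain, so the \<open>measurable\<close> method applies\<close>
  have "finite {n. X n = v} \<longleftrightarrow> (\<exists>N. \<forall>n\<ge>N. X n \<noteq> v)" for X :: "nat \<Rightarrow> nat list" and v
    using MOST_nat_le[of "\<lambda>n. X n \<noteq> v"] by (simp add: Alm_all_def Inf_many_def)
  then have "{L \<in> space random_labeling. escapes (basic_walk L v0 l)}
      = {L \<in> space random_labeling. \<forall>v. \<exists>N. \<forall>n\<ge>N. basic_walk L v0 l n \<noteq> v}"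
    by (simp add: escapes_iff_finite_visits)
  also have "\<dots> \<in> sets random_labeling"
    by measurable
  finally show ?thesis .
qed

text \<open>A list cs in child_seqs (length v0) K encodes the descending path
  v0, v0 @ take 1 cs, ..., v0 @ cs of K steps.\<close>

definition child_seqs :: "nat \<Rightarrow> nat \<Rightarrow> nat list set" where
  "child_seqs m K = {cs. length cs = K \<and> (\<forall>j<K. cs ! j < 2 ^ (m + j))}"

lemma child_seqs_Suc:
  "child_seqs m (Suc K) = (\<lambda>(cs, c). cs @ [c]) ` (child_seqs m K \<times> {..<2 ^ (m + K)})"
proof (intro equalityI subsetI)
  fix cs' assume cs': "cs' \<in> child_seqs m (Suc K)"
  then have "cs' \<noteq> []" and "length cs' = Suc K"
    by (auto simp: child_seqs_def)
  then have "cs' = butlast cs' @ [last cs']" and "last cs' = cs' ! K"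
    by (simp, simp add: last_conv_nth)
  moreover have "butlast cs' \<in> child_seqs m K"
    using cs' by (auto simp: child_seqs_def nth_butlast)
  ultimately show "cs' \<in> (\<lambda>(cs, c). cs @ [c]) ` (child_seqs m K \<times> {..<2 ^ (m + K)})"
    using cs' by (auto simp: child_seqs_def intro!: image_eqI[where x = "(butlast cs', last cs')"])
qed (auto simp: child_seqs_def nth_append less_Suc_eq)

lemma child_seqs_0: "child_seqs m 0 = {[]}"
  by (auto simp: child_seqs_def)

lemma finite_child_seqs: "finite (child_seqs m K)"
  by (induction K) (simp_all add: child_seqs_0 child_seqs_Suc)

lemma card_child_seqs: "card (child_seqs m K) = (\<Prod>j<K. 2 ^ (m + j))"
proof (induction K)
  case 0
  then show ?case
    by (simp add: child_seqs_0)
next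
  case (Suc K)
  have "inj_on (\<lambda>(cs, c). cs @ [c]) (child_seqs m K \<times> {..<2 ^ (m + K)})"
    by (rule inj_onI) auto
  then show ?case
    using Suc finite_child_seqs by (simp add: child_seqs_Suc card_image card_cartesian_product)
qed

lemma prefix_in_T_vertices:
  assumes "v0 \<in> T_vertices" and "cs \<in> child_seqs (length v0) K"
  shows "v0 @ take j cs \<in> T_vertices"
  unfolding T_vertices_def
proof safe
  fix i assume i: "i < length (v0 @ take j cs)"
  show "(v0 @ take j cs) ! i < 2 ^ i"
  proof (cases "i < length v0")
    case True
    then show ?thesis
      using assms(1) by (simp add: nth_append T_vertices_def)
  next
    case False
    with i have "i - length v0 < length cs"
      by simp
    with assms(2) have "cs ! (i - length v0) < 2 ^ (length v0 + (i - length v0))"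
      by (simp add: child_seqs_def)
    with False i show ?thesis
      by (simp add: nth_append)
  qed
qed

lemma prefix_child_in_T_nbrs:
  assumes "cs \<in> child_seqs (length v0) K" and "j < K"
  shows "v0 @ take (Suc j) cs \<in> T_nbrs (v0 @ take j cs)"
proof -
  have "take (Suc j) cs = take j cs @ [cs ! j]"
    using assms by (simp add: child_seqs_def take_Suc_conv_app_nth)
  moreover have "cs ! j < 2 ^ length (v0 @ take j cs)"
    using assms by (auto simp: child_seqs_def)
  ultimately show ?thesis
    using child_in_T_nbrs by (metis append_assoc)
qed

text \<open>The label of the j-th arc of a walk that starts at level m with port l and has only
  descended: it depends on the levels passed, not on the children chosen.\<close>

primrec descent_port :: "nat \<Rightarrow> nat \<Rightarrow> nat \<Rightarrow> nat" where
  "descent_port m l 0 = l"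
| "descent_port m l (Suc j) = descent_port m l j mod level_deg (m + Suc j) + 1"

lemma descent_port_range:
  assumes "l \<in> {1..level_deg m}"
  shows "descent_port m l j \<in> {1..level_deg (m + j)}"
proof (cases j)
  case (Suc k)
  have "0 < level_deg (m + j)"
    by (simp add: level_deg_def)
  then show ?thesis
    using Suc by (simp add: Suc_le_eq)
qed (use assms in simp)

definition path_cylinder :: "nat list \<Rightarrow> nat \<Rightarrow> nat list \<Rightarrow> (nat list \<Rightarrow> nat list \<Rightarrow> nat) set" where
  "path_cylinder v0 l cs = {L \<in> space random_labeling. \<forall>j<length cs.
     L (v0 @ take j cs) (v0 @ take (Suc j) cs) = descent_port (length v0) l j}"

lemma basic_arc_path_cylinder:
  assumes v0: "v0 \<in> T_vertices" and cs: "cs \<in> child_seqs (length v0) K"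
    and L: "L \<in> path_cylinder v0 l cs" and "j < K"
  shows "basic_arc L v0 l j = (v0 @ take j cs, v0 @ take (Suc j) cs)"
  using \<open>j < K\<close>
proof (induction j)
  have space: "L \<in> space random_labeling"
    and label: "\<And>j. j < K \<Longrightarrow> L (v0 @ take j cs) (v0 @ take (Suc j) cs) = descent_port (length v0) l j"
    using L cs by (auto simp: path_cylinder_def child_seqs_def)
  note port = port_nbr_label[OF space prefix_in_T_vertices[OF v0 cs] prefix_child_in_T_nbrs[OF cs]]
  {
    case 0
    then show ?case
      using port[of 0] label[of 0] by simp
  next
    case (Suc j)
    have "T_deg (v0 @ take (Suc j) cs) = level_deg (length v0 + Suc j)"
      using Suc.prems cs by (simp add: T_deg_eq_level_deg child_seqs_def)
    then show ?case
      using Suc port[of "Suc j"] label[of j] label[of "Suc j"] by simp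
  }
qed

lemma path_cylinders_disjoint:
  assumes v0: "v0 \<in> T_vertices"
    and cs: "cs \<in> child_seqs (length v0) K" and cs': "cs' \<in> child_seqs (length v0) K" and "cs \<noteq> cs'"
  shows "path_cylinder v0 l cs \<inter> path_cylinder v0 l cs' = {}"
proof (rule ccontr)
  assume "path_cylinder v0 l cs \<inter> path_cylinder v0 l cs' \<noteq> {}"
  then obtain L where L: "L \<in> path_cylinder v0 l cs" "L \<in> path_cylinder v0 l cs'"
    by blast
  have len: "length cs = K" "length cs' = K"
    using cs cs' by (simp_all add: child_seqs_def)
  with \<open>cs \<noteq> cs'\<close> obtain k where "K = Suc k"
    by (cases K) auto
  then have "take (Suc k) cs = take (Suc k) cs'"
    using basic_arc_path_cylinder[OF v0 cs L(1), of k] basic_arc_path_cylinder[OF v0 cs' L(2), of k]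
    by simp
  with len \<open>K = Suc k\<close> \<open>cs \<noteq> cs'\<close> show False
    by simp
qed

lemma
  fixes K :: nat
  assumes M: "\<And>i. i \<in> I \<Longrightarrow> prob_space (M i)"
    and p: "inj_on p {..<K}" "p ` {..<K} \<subseteq> I" and A: "\<And>j. j < K \<Longrightarrow> A j \<in> sets (M (p j))"
  shows sets_PiM_coordinates: "{x \<in> space (Pi\<^sub>M I M). \<forall>j<K. x (p j) \<in> A j} \<in> sets (Pi\<^sub>M I M)"
    and emeasure_PiM_coordinates:
      "emeasure (Pi\<^sub>M I M) {x \<in> space (Pi\<^sub>M I M). \<forall>j<K. x (p j) \<in> A j}
         = (\<Prod>j<K. emeasure (M (p j)) (A j))"
proof -
  let ?J = "p ` {..<K}"
  let ?B = "\<lambda>i. A (the_inv_into {..<K} p i)"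
  have B: "?B (p j) = A j" if "j < K" for j
    using p(1) that by (simp add: the_inv_into_f_f)
  have eq: "{x \<in> space (Pi\<^sub>M I M). \<forall>j<K. x (p j) \<in> A j} = prod_emb I M ?J (\<Pi>\<^sub>E i\<in>?J. ?B i)"
    by (auto simp: prod_emb_def space_PiM PiE_iff extensional_def B)
  have sets_B: "\<And>i. i \<in> ?J \<Longrightarrow> ?B i \<in> sets (M i)"
    using A B by auto
  show "{x \<in> space (Pi\<^sub>M I M). \<forall>j<K. x (p j) \<in> A j} \<in> sets (Pi\<^sub>M I M)"
    unfolding eq using p(2) sets_B by (intro sets_PiM_I) auto
  have "emeasure (Pi\<^sub>M I M) (prod_emb I M ?J (\<Pi>\<^sub>E i\<in>?J. ?B i)) = (\<Prod>i\<in>?J. emeasure (M i) (?B i))"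
    using M p(2) sets_B by (intro emeasure_PiM_emb) auto
  also have "\<dots> = (\<Prod>j<K. emeasure (M (p j)) (A j))"
    using p(1) by (simp add: prod.reindex B)
  finally show "emeasure (Pi\<^sub>M I M) {x \<in> space (Pi\<^sub>M I M). \<forall>j<K. x (p j) \<in> A j}
      = (\<Prod>j<K. emeasure (M (p j)) (A j))"
    unfolding eq .
qed

lemma
  assumes v0: "v0 \<in> T_vertices" and cs: "cs \<in> child_seqs (length v0) K" and l: "l \<in> {1..T_deg v0}"
  shows sets_path_cylinder: "path_cylinder v0 l cs \<in> sets random_labeling"
    and measure_path_cylinder:
      "measure random_labeling (path_cylinder v0 l cs) = (\<Prod>j<K. 1 / level_deg (length v0 + j))"
proof -
  let ?p = "\<lambda>j. v0 @ take j cs"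
  let ?A = "\<lambda>j. {f \<in> local_labelings (?p j). f (?p (Suc j)) = descent_port (length v0) l j}"
  have K: "length cs = K"
    using cs by (simp add: child_seqs_def)
  have eq: "path_cylinder v0 l cs = {L \<in> space random_labeling. \<forall>j<K. L (?p j) \<in> ?A j}"
    using prefix_in_T_vertices[OF v0 cs] by (auto simp: path_cylinder_def space_random_labeling K)
  have inj: "inj_on ?p {..<K}"
    using K by (intro inj_onI) (auto dest: arg_cong[where f = length])
  have sub: "?p ` {..<K} \<subseteq> T_vertices"
    using prefix_in_T_vertices[OF v0 cs] by blast
  have sets_A: "?A j \<in> sets (uniform_count_measure (local_labelings (?p j)))" for j
    by (auto simp: sets_uniform_count_measure)
  show "path_cylinder v0 l cs \<in> sets random_labeling"
    unfolding eq random_labeling_def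
    by (rule sets_PiM_coordinates[where M = "\<lambda>v. uniform_count_measure (local_labelings v)",
        OF prob_space_local_labelings inj sub sets_A])
  have port_prob: "emeasure (uniform_count_measure (local_labelings (?p j))) (?A j)
      = ennreal (1 / level_deg (length v0 + j))" if "j < K" for j
  proof -
    have "T_deg (?p j) = level_deg (length v0 + j)"
      using that K by (simp add: T_deg_eq_level_deg)
    moreover have "descent_port (length v0) l j \<in> {1..T_deg (?p j)}"
      using descent_port_range[of l "length v0" j] l calculation by (simp add: T_deg_eq_level_deg)
    ultimately show ?thesis
      using emeasure_local_labelings_port[OF prefix_child_in_T_nbrs[OF cs that]] by simp
  qed
  have "emeasure random_labeling (path_cylinder v0 l cs)
      = (\<Prod>j<K. emeasure (uniform_count_measure (local_labelings (?p j))) (?A j))"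
    unfolding eq random_labeling_def
    by (rule emeasure_PiM_coordinates[where M = "\<lambda>v. uniform_count_measure (local_labelings v)",
        OF prob_space_local_labelings inj sub sets_A])
  also have "\<dots> = (\<Prod>j<K. ennreal (1 / level_deg (length v0 + j)))"
    by (rule prod.cong) (simp_all add: port_prob)
  finally show "measure random_labeling (path_cylinder v0 l cs) = (\<Prod>j<K. 1 / level_deg (length v0 + j))"
    by (simp add: measure_def prod_ennreal prod_nonneg)
qed

definition descent_event :: "nat list \<Rightarrow> nat \<Rightarrow> nat \<Rightarrow> (nat list \<Rightarrow> nat list \<Rightarrow> nat) set" where
  "descent_event v0 l K =
     {L \<in> space random_labeling. \<forall>n\<le>K. length (basic_walk L v0 l n) = length v0 + n}"

lemma sets_descent_event: "descent_event v0 l K \<in> sets random_labeling"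
  unfolding descent_event_def by measurable

lemma decseq_descent_event: "decseq (descent_event v0 l)"
  by (rule decseq_SucI) (auto simp: descent_event_def)

lemma path_cylinder_subset_descent_event:
  assumes "v0 \<in> T_vertices" and cs: "cs \<in> child_seqs (length v0) K"
  shows "path_cylinder v0 l cs \<subseteq> descent_event v0 l K"
proof
  fix L assume L: "L \<in> path_cylinder v0 l cs"
  have "length (basic_walk L v0 l (Suc j)) = length v0 + Suc j" if "j < K" for j
    using basic_arc_path_cylinder[OF assms L that] that cs by (simp add: basic_walk_def child_seqs_def)
  then have "length (basic_walk L v0 l n) = length v0 + n" if "n \<le> K" for n
    using that by (cases n) (simp_all add: basic_walk_def)
  with L show "L \<in> descent_event v0 l K"
    by (simp add: descent_event_def path_cylinder_def)
qed

lemma measure_descent_event_ge: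
  assumes v0: "v0 \<in> T_vertices" and l: "l \<in> {1..T_deg v0}"
  shows "(\<Prod>j<K. 2 ^ (length v0 + j) / level_deg (length v0 + j))
           \<le> measure random_labeling (descent_event v0 l K)"
proof -
  let ?C = "path_cylinder v0 l"
  let ?S = "child_seqs (length v0) K"
  interpret prob_space random_labeling
    by (rule prob_space_random_labeling)
  have "(\<Prod>j<K. 2 ^ (length v0 + j) / level_deg (length v0 + j))
      = real (card ?S) * (\<Prod>j<K. 1 / level_deg (length v0 + j))"
    by (simp add: card_child_seqs prod.distrib[symmetric])
  also have "\<dots> = (\<Sum>cs\<in>?S. measure random_labeling (?C cs))"
    using measure_path_cylinder[OF v0 _ l] by simp
  also have "\<dots> = measure random_labeling (\<Union>cs\<in>?S. ?C cs)"
    using sets_path_cylinder[OF v0 _ l] path_cylinders_disjoint[OF v0]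
    by (intro measure_finite_Union[symmetric]) (auto simp: finite_child_seqs disjoint_family_on_def)
  also have "\<dots> \<le> measure random_labeling (descent_event v0 l K)"
    using path_cylinder_subset_descent_event[OF v0] sets_descent_event
    by (intro finite_measure_mono) auto
  finally show ?thesis .
qed

lemma descent_forever_subset_escapes:
  "(\<Inter>K. descent_event v0 l K) \<subseteq> {L \<in> space random_labeling. escapes (basic_walk L v0 l)}"
proof
  fix L assume "L \<in> (\<Inter>K. descent_event v0 l K)"
  then have "L \<in> space random_labeling" and len: "length (basic_walk L v0 l n) = length v0 + n" for n
    by (auto simp: descent_event_def)
  moreover have "inj (basic_walk L v0 l)"
    by (rule injI) (metis len add_left_cancel)
  ultimately show "L \<in> {L \<in> space random_labeling. escapes (basic_walk L v0 l)}"
    by (simp add: escapes_if_inj)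
qed

text \<open>For n > 0 the invariant g n = 1/4 + 1/2^n satisfies g (n+1) \<le> g n * 2^n/(2^n+1), since
  clearing denominators this is 2 \<le> 2^n; the root, with ratio 1, is covered by capping at 1.\<close>

lemma level_ratio_step:
  "min 1 (1/4 + 1 / 2 ^ Suc n) \<le> min 1 (1/4 + 1 / 2 ^ n) * (2 ^ n / level_deg n :: real)"
proof (cases "n = 0")
  case False
  define p :: real where "p = 2 ^ n"
  have "(2::real) ^ 1 \<le> 2 ^ n"
    using False by (intro power_increasing) auto
  then have p: "2 \<le> p"
    by (simp add: p_def)
  have "min 1 (1/4 + 1 / 2 ^ Suc n) \<le> 1/4 + 1 / (2 * p)"
    by (simp add: p_def)
  also have "\<dots> \<le> (1/4 + 1/p) * (p / (p + 1))"
    using p by (simp add: divide_simps) (simp add: algebra_simps)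
  also have "\<dots> = min 1 (1/4 + 1/p) * (p / (p + 1))"
    using p by (simp add: min_def divide_simps)
  also have "\<dots> = min 1 (1/4 + 1 / 2 ^ n) * (2 ^ n / level_deg n)"
    using False by (simp add: p_def level_deg_def)
  finally show ?thesis .
qed (simp add: level_deg_def)

lemma prod_level_ratio_ge: "1/4 \<le> (\<Prod>j<K. 2 ^ (m + j) / real (level_deg (m + j)))"
proof -
  have "min 1 (1/4 + 1 / 2 ^ (m + K)) \<le> (\<Prod>j<K. 2 ^ (m + j) / real (level_deg (m + j)))"
  proof (induction K)
    case (Suc K)
    have "min 1 (1/4 + 1 / 2 ^ (m + Suc K))
        \<le> min 1 (1/4 + 1 / 2 ^ (m + K)) * (2 ^ (m + K) / level_deg (m + K))"
      using level_ratio_step[of "m + K"] by simp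
    also have "\<dots> \<le> (\<Prod>j<K. 2 ^ (m + j) / real (level_deg (m + j))) * (2 ^ (m + K) / level_deg (m + K))"
      using Suc.IH by (rule mult_right_mono) simp
    finally show ?case
      by simp
  qed simp
  moreover have "1/4 \<le> min 1 (1/4 + 1 / 2 ^ (m + K) :: real)"
    by simp
  ultimately show ?thesis
    by linarith
qed

theorem theorem4p8:
  assumes "v0 \<in> T_vertices" and "l \<in> {1..T_deg v0}"
  shows "measure random_labeling
           {L \<in> space random_labeling. escapes (basic_walk L v0 l)} > 0"
proof -
  interpret prob_space random_labeling
    by (rule prob_space_random_labeling)
  let ?E = "descent_event v0 l"
  have "(\<lambda>K. measure random_labeling (?E K)) \<longlonglongrightarrow> measure random_labeling (\<Inter>K. ?E K)"
    using sets_descent_event decseq_descent_event by (intro finite_Lim_measure_decseq) auto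
  moreover have "1/4 \<le> measure random_labeling (?E K)" for K
    using prod_level_ratio_ge measure_descent_event_ge[OF assms] by (rule order_trans)
  ultimately have "1/4 \<le> measure random_labeling (\<Inter>K. ?E K)"
    by (intro LIMSEQ_le_const) auto
  moreover have "measure random_labeling (\<Inter>K. ?E K)
      \<le> measure random_labeling {L \<in> space random_labeling. escapes (basic_walk L v0 l)}"
    using descent_forever_subset_escapes sets_escapes by (rule finite_measure_mono)
  ultimately show ?thesis
    by linarith
qed

end
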